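(* Let $X$ be a topological space. Then $X$ is core-compact if and only if its symmetric pseudogroup $\mathscr{I}(X)$ is continuous.
   Context: The symmetric pseudogroup $\mathscr{I}(X)$ is the set of all homeomorphisms $f:U\to V$ between open subsets $U=\mathrm{dom}(f)$ and $V$ of $X$, with product: for $f:U\to V$ and $f_1:U_1\to V_1$, $f_1\cdot f : x\mapsto f_1(f(x))$ defined on $f^{-1}(V\cap U_1)$ with values in $f_1(V\cap U_1)$; it is an inverse semigroup with $f^*=f^{-1}$. Its intrinsic order is $f\leqslant g$ iff $f=g|_U$ for some open $U\subseteq\mathrm{dom}(g)$. In a poset, $x$ is way-below $y$ ($x\ll y$) if for every directed subset $D$ (nonempty, any two elements having an upper bound in $D$) that has a supremum with $y\leqslant\sup D$, there is $d\in D$ with $x\leqslant d$. A poset is continuous if for every $s$ the set $\{t: t\ll s\}$ is directed with supremum $s$; $\mathscr{I}(X)$ is continuous if it is so for its intrinsic order. $X$ is core-compact if the collection of closed subsets of $X$, ordered by reverse inclusion $\supseteq$, is a continuous poset. *)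

theory Defs
  imports "HOL-Analysis.Analysis"
begin

definition directed_in :: "'b set \<Rightarrow> ('b \<Rightarrow> 'b \<Rightarrow> bool) \<Rightarrow> 'b set \<Rightarrow> bool" where
  "directed_in A le D \<longleftrightarrow> D \<subseteq> A \<and> D \<noteq> {} \<and>
     (\<forall>x\<in>D. \<forall>y\<in>D. \<exists>z\<in>D. le x z \<and> le y z)"

definition is_sup_in :: "'b set \<Rightarrow> ('b \<Rightarrow> 'b \<Rightarrow> bool) \<Rightarrow> 'b set \<Rightarrow> 'b \<Rightarrow> bool" where
  "is_sup_in A le D s \<longleftrightarrow> s \<in> A \<and> (\<forall>d\<in>D. le d s) \<and>
     (\<forall>u\<in>A. (\<forall>d\<in>D. le d u) \<longrightarrow> le s u)"

definition way_below :: "'b set \<Rightarrow> ('b \<Rightarrow> 'b \<Rightarrow> bool) \<Rightarrow> 'b \<Rightarrow> 'b \<Rightarrow> bool" where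
  "way_below A le x y \<longleftrightarrow>
     (\<forall>D. directed_in A le D \<longrightarrow> (\<forall>s. is_sup_in A le D s \<longrightarrow> le y s \<longrightarrow> (\<exists>d\<in>D. le x d)))"

definition continuous_poset :: "'b set \<Rightarrow> ('b \<Rightarrow> 'b \<Rightarrow> bool) \<Rightarrow> bool" where
  "continuous_poset A le \<longleftrightarrow>
     (\<forall>s\<in>A. directed_in A le {t\<in>A. way_below A le t s} \<and>
             is_sup_in A le {t\<in>A. way_below A le t s} s)"

definition core_compact :: "'a topology \<Rightarrow> bool" where
  "core_compact X \<longleftrightarrow> continuous_poset {C. closedin X C} (\<lambda>C D. D \<subseteq> C)"

text \<open>A partial homeomorphism f : U -> V between open subsets is represented as a
  partial map with domain U = dom f and image V = ran f.\<close>
definition sym_pseudogroup :: "'a topology \<Rightarrow> ('a \<rightharpoonup> 'a) set" where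
  "sym_pseudogroup X = {f. openin X (dom f) \<and> openin X (ran f) \<and>
      homeomorphic_map (subtopology X (dom f)) (subtopology X (ran f)) (\<lambda>x. the (f x))}"

definition pg_mult :: "('a \<rightharpoonup> 'a) \<Rightarrow> ('a \<rightharpoonup> 'a) \<Rightarrow> ('a \<rightharpoonup> 'a)" where
  "pg_mult f1 f = f1 \<circ>\<^sub>m f"

definition pg_le :: "'a topology \<Rightarrow> ('a \<rightharpoonup> 'a) \<Rightarrow> ('a \<rightharpoonup> 'a) \<Rightarrow> bool" where
  "pg_le X f g \<longleftrightarrow> (\<exists>U. openin X U \<and> U \<subseteq> dom g \<and> f = g |` U)"

end

theory Submission
  imports Defs
begin

text \<open>Both sides reduce to continuity of the frame of open sets of \<open>X\<close>. Complementation is an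
  order isomorphism from the closed sets under reverse inclusion onto the open sets under
  inclusion, and continuity is invariant under order isomorphisms. In the pseudogroup, the
  elements below \<open>f\<close> are the restrictions of \<open>f\<close> to open subsets of its domain, and the domain
  of a supremum is the union of the domains; hence \<open>g \<ll> f\<close> iff \<open>g \<le> f\<close> and
  \<open>dom g \<ll> dom f\<close>, so continuity at \<open>f\<close> is continuity of the open sets at \<open>dom f\<close>. Every
  open set is the domain of an identity map, which gives the equivalence.\<close>

definition continuous_at_in :: "'b set \<Rightarrow> ('b \<Rightarrow> 'b \<Rightarrow> bool) \<Rightarrow> 'b \<Rightarrow> bool" where
  "continuous_at_in A le s \<longleftrightarrow>
     directed_in A le {t\<in>A. way_below A le t s} \<and> is_sup_in A le {t\<in>A. way_below A le t s} s"

lemma continuous_poset_iff_at: "continuous_poset A le \<longleftrightarrow> (\<forall>s\<in>A. continuous_at_in A le s)"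
  unfolding continuous_poset_def continuous_at_in_def ..

lemma directed_in_subset: "directed_in A le D \<Longrightarrow> D \<subseteq> A"
  unfolding directed_in_def by simp

lemma way_belowD:
  "way_below A le x y \<Longrightarrow> directed_in A le D \<Longrightarrow> is_sup_in A le D s \<Longrightarrow> le y s \<Longrightarrow> \<exists>d\<in>D. le x d"
  unfolding way_below_def by blast

lemma way_below_imp_le:
  assumes "way_below A le x y" "y \<in> A" "le y y"
  shows "le x y"
proof -
  have "directed_in A le {y}" "is_sup_in A le {y} y"
    using assms(2,3) unfolding directed_in_def is_sup_in_def by auto
  then show ?thesis
    using way_belowD[OF assms(1)] assms(3) by blast
qed

lemma directed_in_image:
  assumes "directed_in A le D" "\<phi> ` D \<subseteq> B" "\<And>x y. x \<in> D \<Longrightarrow> y \<in> D \<Longrightarrow> le x y \<Longrightarrow> le' (\<phi> x) (\<phi> y)"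
  shows "directed_in B le' (\<phi> ` D)"
  using assms unfolding directed_in_def by (simp add: image_iff) meson

lemma directed_in_image_iff:
  assumes "D \<subseteq> A" "\<phi> ` D \<subseteq> B" "\<And>x y. x \<in> D \<Longrightarrow> y \<in> D \<Longrightarrow> le' (\<phi> x) (\<phi> y) \<longleftrightarrow> le x y"
  shows "directed_in B le' (\<phi> ` D) \<longleftrightarrow> directed_in A le D"
  using assms unfolding directed_in_def by auto

lemma is_sup_in_image_iff:
  assumes "\<phi> ` A = B" "D \<subseteq> A" "s \<in> A" "\<And>x y. x \<in> A \<Longrightarrow> y \<in> A \<Longrightarrow> le' (\<phi> x) (\<phi> y) \<longleftrightarrow> le x y"
  shows "is_sup_in B le' (\<phi> ` D) (\<phi> s) \<longleftrightarrow> is_sup_in A le D s"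
  using assms unfolding is_sup_in_def by (simp add: subset_iff) blast

lemma way_below_image_iff:
  assumes B: "\<phi> ` A = B" and "x \<in> A" "y \<in> A"
    and emb: "\<And>x y. x \<in> A \<Longrightarrow> y \<in> A \<Longrightarrow> le' (\<phi> x) (\<phi> y) \<longleftrightarrow> le x y"
  shows "way_below B le' (\<phi> x) (\<phi> y) \<longleftrightarrow> way_below A le x y"
proof -
  have "way_below B le' (\<phi> x) (\<phi> y) \<longleftrightarrow>
      (\<forall>D'\<subseteq>\<phi> ` A. directed_in B le' D' \<longrightarrow>
        (\<forall>s'\<in>\<phi> ` A. is_sup_in B le' D' s' \<longrightarrow> le' (\<phi> y) s' \<longrightarrow> (\<exists>d\<in>D'. le' (\<phi> x) d)))"
    unfolding way_below_def directed_in_def is_sup_in_def B by blast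
  also have "\<dots> \<longleftrightarrow> (\<forall>D\<subseteq>A. directed_in B le' (\<phi> ` D) \<longrightarrow>
        (\<forall>s\<in>A. is_sup_in B le' (\<phi> ` D) (\<phi> s) \<longrightarrow> le' (\<phi> y) (\<phi> s) \<longrightarrow> (\<exists>d\<in>D. le' (\<phi> x) (\<phi> d))))"
    unfolding all_subset_image by simp
  also have "\<dots> \<longleftrightarrow> (\<forall>D\<subseteq>A. directed_in A le D \<longrightarrow>
        (\<forall>s\<in>A. is_sup_in A le D s \<longrightarrow> le y s \<longrightarrow> (\<exists>d\<in>D. le x d)))"
  proof -
    have dir: "directed_in B le' (\<phi> ` D) \<longleftrightarrow> directed_in A le D" if "D \<subseteq> A" for D
      by (rule directed_in_image_iff) (use that B emb in auto)
    have sup: "is_sup_in B le' (\<phi> ` D) (\<phi> s) \<longleftrightarrow> is_sup_in A le D s" if "D \<subseteq> A" "s \<in> A" for D s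
      by (rule is_sup_in_image_iff) (use that B emb in auto)
    have bound: "le' (\<phi> y) (\<phi> s) \<longleftrightarrow> le y s" if "s \<in> A" for s
      using emb assms(3) that .
    have witness: "(\<exists>d\<in>D. le' (\<phi> x) (\<phi> d)) \<longleftrightarrow> (\<exists>d\<in>D. le x d)" if "D \<subseteq> A" for D
      using emb assms(2) that by blast
    show ?thesis
      by (simp add: dir sup bound witness)
  qed
  also have "\<dots> \<longleftrightarrow> way_below A le x y"
    unfolding way_below_def directed_in_def is_sup_in_def by blast
  finally show ?thesis .
qed

lemma continuous_poset_image_iff:
  assumes B: "\<phi> ` A = B"
    and emb: "\<And>x y. x \<in> A \<Longrightarrow> y \<in> A \<Longrightarrow> le' (\<phi> x) (\<phi> y) \<longleftrightarrow> le x y"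
  shows "continuous_poset A le \<longleftrightarrow> continuous_poset B le'"
proof -
  have "continuous_at_in B le' (\<phi> s) \<longleftrightarrow> continuous_at_in A le s" if s: "s \<in> A" for s
  proof -
    have "{t\<in>B. way_below B le' t (\<phi> s)} = \<phi> ` {t\<in>A. way_below A le t s}"
      using way_below_image_iff[where le=le, OF B _ s emb] B by auto
    moreover have "directed_in B le' (\<phi> ` {t\<in>A. way_below A le t s}) \<longleftrightarrow>
        directed_in A le {t\<in>A. way_below A le t s}"
      by (rule directed_in_image_iff) (use B emb in auto)
    moreover have "is_sup_in B le' (\<phi> ` {t\<in>A. way_below A le t s}) (\<phi> s) \<longleftrightarrow>
        is_sup_in A le {t\<in>A. way_below A le t s} s"
      by (rule is_sup_in_image_iff) (use B s emb in auto)
    ultimately show ?thesis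
      unfolding continuous_at_in_def by simp
  qed
  then show ?thesis
    unfolding continuous_poset_iff_at B[symmetric] by simp
qed

abbreviation open_sets :: "'a topology \<Rightarrow> 'a set set" where
  "open_sets X \<equiv> {U. openin X U}"

lemma is_sup_in_open_sets_iff:
  assumes "\<U> \<subseteq> open_sets X"
  shows "is_sup_in (open_sets X) (\<subseteq>) \<U> S \<longleftrightarrow> S = \<Union>\<U>"
proof -
  have "openin X (\<Union>\<U>)"
    using assms by blast
  then show ?thesis
    unfolding is_sup_in_def by blast
qed

lemma core_compact_iff_continuous_open_sets:
  "core_compact X \<longleftrightarrow> continuous_poset (open_sets X) (\<subseteq>)"
proof -
  have "(\<lambda>C. topspace X - C) ` {C. closedin X C} = open_sets X"
  proof (intro equalityI subsetI)
    fix U assume "U \<in> open_sets X"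
    then have "U = topspace X - (topspace X - U)" "closedin X (topspace X - U)"
      using openin_subset by blast+
    then show "U \<in> (\<lambda>C. topspace X - C) ` {C. closedin X C}"
      by blast
  qed auto
  moreover have "topspace X - C \<subseteq> topspace X - D \<longleftrightarrow> D \<subseteq> C"
    if "C \<in> {C. closedin X C}" "D \<in> {C. closedin X C}" for C D
    using that closedin_subset by blast
  ultimately show ?thesis
    unfolding core_compact_def by (rule continuous_poset_image_iff)
qed

lemma restrict_map_Int_dom: "f |` (U \<inter> dom f) = f |` U"
  by (auto simp: restrict_map_def fun_eq_iff)

lemma pg_le_iff: "pg_le X g f \<longleftrightarrow> openin X (dom g) \<and> dom g \<subseteq> dom f \<and> g = f |` dom g"
proof
  assume "pg_le X g f"
  then obtain U where "openin X U" "U \<subseteq> dom f" "g = f |` U"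
    unfolding pg_le_def by blast
  moreover from calculation have "dom g = U"
    by auto
  ultimately show "openin X (dom g) \<and> dom g \<subseteq> dom f \<and> g = f |` dom g"
    by simp
qed (auto simp: pg_le_def)

lemma pg_le_refl: "openin X (dom f) \<Longrightarrow> pg_le X f f"
  unfolding pg_le_iff by (auto simp: restrict_map_def fun_eq_iff)

lemma pg_le_trans:
  assumes "pg_le X g f" "pg_le X f h"
  shows "pg_le X g h"
proof -
  have "g = h |` dom f |` dom g" "dom g \<subseteq> dom f"
    using assms unfolding pg_le_iff by auto
  then have "g = h |` dom g"
    by (simp add: Int_absorb1)
  then show ?thesis
    using assms unfolding pg_le_iff by auto
qed

lemma pg_le_restrict: "openin X (dom f) \<Longrightarrow> openin X U \<Longrightarrow> pg_le X (f |` U) f"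
  unfolding pg_le_iff by (auto simp: Int_commute restrict_map_Int_dom)

lemma pg_le_apply: "pg_le X g f \<Longrightarrow> x \<in> dom g \<Longrightarrow> g x = f x"
  unfolding pg_le_iff by (metis restrict_in)

lemma pg_le_below_common:
  assumes g: "pg_le X g s" and d: "pg_le X d s" and sub: "dom g \<subseteq> dom d"
  shows "pg_le X g d"
proof -
  have "d |` dom g = s |` dom d |` dom g"
    using d unfolding pg_le_iff by simp
  also have "\<dots> = s |` dom g"
    using sub by (simp add: Int_absorb1)
  also have "\<dots> = g"
    using g unfolding pg_le_iff by simp
  finally show ?thesis
    using g sub unfolding pg_le_iff by simp
qed

lemma pg_le_restrict_mono:
  assumes "openin X (dom f)" "openin X U" "openin X W" "U \<subseteq> W"
  shows "pg_le X (f |` U) (f |` W)"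
  by (rule pg_le_below_common[OF pg_le_restrict pg_le_restrict]) (use assms in auto)

lemma openin_dom_sym_pseudogroup: "f \<in> sym_pseudogroup X \<Longrightarrow> openin X (dom f)"
  unfolding sym_pseudogroup_def by simp

lemma restrict_map_in_sym_pseudogroup:
  assumes f: "f \<in> sym_pseudogroup X" and U: "openin X U"
  shows "f |` U \<in> sym_pseudogroup X"
proof -
  let ?h = "\<lambda>x. the (f x)" and ?V = "U \<inter> dom f"
  have D: "openin X (dom f)" and R: "openin X (ran f)"
    and hom: "homeomorphic_map (subtopology X (dom f)) (subtopology X (ran f)) ?h"
    using f unfolding sym_pseudogroup_def by auto
  have V: "openin X ?V" "?V \<subseteq> dom f"
    using U D by auto
  have ran_eq: "ran (f |` U) = ?h ` ?V"
    by (force simp: ran_def restrict_map_def)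
  have "?h ` ?V \<subseteq> ran f"
    by (force simp: ran_def)
  then have hom_V: "homeomorphic_map (subtopology X ?V) (subtopology X (?h ` ?V)) ?h"
    using homeomorphic_map_subtopologies[OF hom, of ?V "?h ` ?V"] V(2) openin_subset[OF D] openin_subset[OF R]
    by (simp add: subtopology_subtopology Int_absorb1 Int_absorb2)
  have "openin (subtopology X (dom f)) ?V"
    using V by (simp add: openin_open_subtopology D)
  then have "openin (subtopology X (ran f)) (?h ` ?V)"
    using homeomorphic_imp_open_map[OF hom] unfolding open_map_def by blast
  then have "openin X (?h ` ?V)"
    using R openin_trans_full by blast
  moreover have "homeomorphic_map (subtopology X ?V) (subtopology X (?h ` ?V)) (\<lambda>x. the ((f |` U) x))"
    using hom_V by (rule homeomorphic_map_eq) simp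
  ultimately show ?thesis
    unfolding sym_pseudogroup_def using V ran_eq by (simp add: Int_commute)
qed

lemma restrict_Some_in_sym_pseudogroup:
  assumes "openin X V"
  shows "Some |` V \<in> sym_pseudogroup X"
proof -
  have "ran (Some |` V) = V"
    by (auto simp: ran_def restrict_map_def)
  moreover have "homeomorphic_map (subtopology X V) (subtopology X V) (\<lambda>x. the ((Some |` V) x))"
    by (rule homeomorphic_map_eq[OF homeomorphic_map_id[THEN iffD2]]) auto
  ultimately show ?thesis
    unfolding sym_pseudogroup_def using assms by simp
qed

lemma dom_sym_pseudogroup: "dom ` sym_pseudogroup X = open_sets X"
proof (intro equalityI subsetI)
  fix V assume "V \<in> open_sets X"
  then have "Some |` V \<in> sym_pseudogroup X" "dom (Some |` V) = V"
    using restrict_Some_in_sym_pseudogroup by auto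
  then show "V \<in> dom ` sym_pseudogroup X"
    by (metis image_eqI)
qed (auto simp: openin_dom_sym_pseudogroup)

lemma dom_sup_sym_pseudogroup:
  assumes "is_sup_in (sym_pseudogroup X) (pg_le X) D s"
  shows "dom s = \<Union>(dom ` D)"
proof -
  let ?W = "\<Union>(dom ` D)"
  have s: "s \<in> sym_pseudogroup X" and ub: "\<And>d. d \<in> D \<Longrightarrow> pg_le X d s"
    and least: "\<And>u. u \<in> sym_pseudogroup X \<Longrightarrow> \<forall>d\<in>D. pg_le X d u \<Longrightarrow> pg_le X s u"
    using assms unfolding is_sup_in_def by auto
  have W: "openin X ?W"
    using ub by (auto simp: pg_le_iff)
  \<comment> \<open>\<open>s\<close> restricted to the union of the domains is still an upper bound, so it lies above \<open>s\<close>\<close>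
  have "pg_le X d (s |` ?W)" if "d \<in> D" for d
  proof (rule pg_le_below_common[OF ub[OF that]])
    show "pg_le X (s |` ?W) s"
      using pg_le_restrict[OF openin_dom_sym_pseudogroup[OF s] W] .
    show "dom d \<subseteq> dom (s |` ?W)"
      using that ub[OF that] by (auto simp: pg_le_iff)
  qed
  then have "pg_le X s (s |` ?W)"
    using least restrict_map_in_sym_pseudogroup[OF s W] by blast
  then have "dom s \<subseteq> ?W"
    by (auto simp: pg_le_iff)
  moreover have "?W \<subseteq> dom s"
    using ub by (auto simp: pg_le_iff)
  ultimately show ?thesis
    by blast
qed

lemma is_sup_restrictions_iff:
  assumes f: "f \<in> sym_pseudogroup X" and \<U>: "\<U> \<subseteq> open_sets X"
  shows "is_sup_in (sym_pseudogroup X) (pg_le X) ((\<lambda>U. f |` U) ` \<U>) f \<longleftrightarrow> dom f \<subseteq> \<Union>\<U>"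
proof
  assume "is_sup_in (sym_pseudogroup X) (pg_le X) ((\<lambda>U. f |` U) ` \<U>) f"
  then show "dom f \<subseteq> \<Union>\<U>"
    using dom_sup_sym_pseudogroup by fastforce
next
  assume cover: "dom f \<subseteq> \<Union>\<U>"
  have D: "openin X (dom f)"
    using f by (rule openin_dom_sym_pseudogroup)
  have "pg_le X f u"
    if u: "\<And>U. U \<in> \<U> \<Longrightarrow> pg_le X (f |` U) u" for u
  proof -
    have agree: "x \<in> dom u \<and> u x = f x" if x: "x \<in> dom f" for x
    proof -
      obtain U where "U \<in> \<U>" "x \<in> U"
        using cover x by blast
      with u x have le: "pg_le X (f |` U) u" and x_U: "x \<in> dom (f |` U)"
        by auto
      then have "(f |` U) x = u x"
        by (rule pg_le_apply)
      then show ?thesis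
        using le x_U \<open>x \<in> U\<close> by (auto simp: pg_le_iff)
    qed
    have "f = u |` dom f"
      by (rule ext) (use agree in \<open>auto simp: restrict_map_def domIff\<close>)
    then show ?thesis
      using D agree by (auto simp: pg_le_iff)
  qed
  then show "is_sup_in (sym_pseudogroup X) (pg_le X) ((\<lambda>U. f |` U) ` \<U>) f"
    unfolding is_sup_in_def using f D \<U> by (auto intro: pg_le_restrict)
qed

lemma way_below_sym_pseudogroupD:
  assumes f: "f \<in> sym_pseudogroup X" and g_wb: "way_below (sym_pseudogroup X) (pg_le X) g f"
  shows "pg_le X g f" and "way_below (open_sets X) (\<subseteq>) (dom g) (dom f)"
proof -
  have f_le: "pg_le X f f"
    using f by (intro pg_le_refl openin_dom_sym_pseudogroup)
  show "pg_le X g f"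
    using g_wb f f_le by (rule way_below_imp_le[where le = "pg_le X"])
  show "way_below (open_sets X) (\<subseteq>) (dom g) (dom f)"
    unfolding way_below_def
  proof (intro allI impI)
    fix \<U> S
    assume dir: "directed_in (open_sets X) (\<subseteq>) \<U>" and sup: "is_sup_in (open_sets X) (\<subseteq>) \<U> S"
      and "dom f \<subseteq> S"
    have \<U>: "\<U> \<subseteq> open_sets X"
      using dir by (rule directed_in_subset)
    with sup \<open>dom f \<subseteq> S\<close> have "dom f \<subseteq> \<Union>\<U>"
      using is_sup_in_open_sets_iff[OF \<U>] by blast
    then have "is_sup_in (sym_pseudogroup X) (pg_le X) ((\<lambda>U. f |` U) ` \<U>) f"
      using is_sup_restrictions_iff[OF f \<U>] by blast
    moreover have "directed_in (sym_pseudogroup X) (pg_le X) ((\<lambda>U. f |` U) ` \<U>)"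
    proof (rule directed_in_image[OF dir])
      show "(\<lambda>U. f |` U) ` \<U> \<subseteq> sym_pseudogroup X"
        using \<U> restrict_map_in_sym_pseudogroup[OF f] by blast
      show "pg_le X (f |` U) (f |` W)" if "U \<in> \<U>" "W \<in> \<U>" "U \<subseteq> W" for U W
        by (rule pg_le_restrict_mono[OF openin_dom_sym_pseudogroup[OF f]]) (use that \<U> in auto)
    qed
    ultimately obtain U where "U \<in> \<U>" "pg_le X g (f |` U)"
      using way_belowD[OF g_wb] f_le by blast
    then show "\<exists>U\<in>\<U>. dom g \<subseteq> U"
      by (auto simp: pg_le_iff)
  qed
qed

lemma way_below_sym_pseudogroupI:
  assumes g_f: "pg_le X g f" and dom_wb: "way_below (open_sets X) (\<subseteq>) (dom g) (dom f)"
  shows "way_below (sym_pseudogroup X) (pg_le X) g f"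
  unfolding way_below_def
proof (intro allI impI)
  fix D s
  assume dir: "directed_in (sym_pseudogroup X) (pg_le X) D"
    and sup: "is_sup_in (sym_pseudogroup X) (pg_le X) D s" and f_s: "pg_le X f s"
  have dom_D: "dom ` D \<subseteq> open_sets X"
    using directed_in_subset[OF dir] openin_dom_sym_pseudogroup by blast
  have "directed_in (open_sets X) (\<subseteq>) (dom ` D)"
    by (rule directed_in_image[OF dir dom_D]) (simp add: pg_le_iff)
  moreover have "is_sup_in (open_sets X) (\<subseteq>) (dom ` D) (dom s)"
    using is_sup_in_open_sets_iff[OF dom_D] dom_sup_sym_pseudogroup[OF sup] by blast
  moreover have "dom f \<subseteq> dom s"
    using f_s by (simp add: pg_le_iff)
  ultimately obtain d where d: "d \<in> D" "dom g \<subseteq> dom d"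
    using way_belowD[OF dom_wb] by blast
  moreover have "pg_le X d s"
    using sup d(1) unfolding is_sup_in_def by blast
  ultimately have "pg_le X g d"
    using pg_le_below_common[OF pg_le_trans[OF g_f f_s]] by blast
  then show "\<exists>d\<in>D. pg_le X g d"
    using d by blast
qed

lemma way_below_sym_pseudogroup_iff:
  assumes "f \<in> sym_pseudogroup X"
  shows "way_below (sym_pseudogroup X) (pg_le X) g f \<longleftrightarrow>
    pg_le X g f \<and> way_below (open_sets X) (\<subseteq>) (dom g) (dom f)"
  using way_below_sym_pseudogroupD[OF assms] way_below_sym_pseudogroupI by blast

lemma way_below_set_sym_pseudogroup:
  assumes f: "f \<in> sym_pseudogroup X"
  shows "{t \<in> sym_pseudogroup X. way_below (sym_pseudogroup X) (pg_le X) t f} =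
    (\<lambda>U. f |` U) ` {U \<in> open_sets X. way_below (open_sets X) (\<subseteq>) U (dom f)}"
    (is "_ = _ ` ?\<W>")
proof (intro equalityI subsetI)
  fix t assume "t \<in> {t \<in> sym_pseudogroup X. way_below (sym_pseudogroup X) (pg_le X) t f}"
  then have t_f: "pg_le X t f" and "way_below (open_sets X) (\<subseteq>) (dom t) (dom f)"
    using way_below_sym_pseudogroup_iff[OF f] by auto
  moreover have "t = f |` dom t" "openin X (dom t)"
    using t_f by (simp_all add: pg_le_iff)
  ultimately show "t \<in> (\<lambda>U. f |` U) ` ?\<W>"
    by (intro image_eqI[where x = "dom t"]) simp_all
next
  fix t assume "t \<in> (\<lambda>U. f |` U) ` ?\<W>"
  then obtain U where U: "U \<in> ?\<W>" and t: "t = f |` U"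
    by blast
  have D: "openin X (dom f)"
    using f by (rule openin_dom_sym_pseudogroup)
  then have "U \<subseteq> dom f"
    using U way_below_imp_le[of "open_sets X" "(\<subseteq>)" U "dom f"] by simp
  then have "dom t = U"
    using t by auto
  moreover have "pg_le X t f"
    using t D U by (simp add: pg_le_restrict)
  ultimately have "way_below (sym_pseudogroup X) (pg_le X) t f"
    using U way_below_sym_pseudogroup_iff[OF f] by simp
  moreover have "t \<in> sym_pseudogroup X"
    using t U restrict_map_in_sym_pseudogroup[OF f] by simp
  ultimately show "t \<in> {t \<in> sym_pseudogroup X. way_below (sym_pseudogroup X) (pg_le X) t f}"
    by simp
qed

lemma continuous_at_sym_pseudogroup_iff:
  assumes f: "f \<in> sym_pseudogroup X"
  shows "continuous_at_in (sym_pseudogroup X) (pg_le X) f \<longleftrightarrow>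
    continuous_at_in (open_sets X) (\<subseteq>) (dom f)"
proof -
  let ?\<W> = "{U \<in> open_sets X. way_below (open_sets X) (\<subseteq>) U (dom f)}"
  have D: "openin X (dom f)"
    using f by (rule openin_dom_sym_pseudogroup)
  have \<W>_open: "?\<W> \<subseteq> open_sets X"
    by auto
  have \<W>_sub: "U \<subseteq> dom f" if "U \<in> ?\<W>" for U
    using that D way_below_imp_le[of "open_sets X" "(\<subseteq>)" U "dom f"] by simp
  have way_below_f: "{t \<in> sym_pseudogroup X. way_below (sym_pseudogroup X) (pg_le X) t f} =
      (\<lambda>U. f |` U) ` ?\<W>"
    using f by (rule way_below_set_sym_pseudogroup)
  have "directed_in (sym_pseudogroup X) (pg_le X) ((\<lambda>U. f |` U) ` ?\<W>) \<longleftrightarrow>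
      directed_in (open_sets X) (\<subseteq>) ?\<W>"
  proof (rule directed_in_image_iff[OF \<W>_open])
    show "(\<lambda>U. f |` U) ` ?\<W> \<subseteq> sym_pseudogroup X"
      using restrict_map_in_sym_pseudogroup[OF f] by auto
    fix U W assume U: "U \<in> ?\<W>" and W: "W \<in> ?\<W>"
    show "pg_le X (f |` U) (f |` W) \<longleftrightarrow> U \<subseteq> W"
    proof
      assume "pg_le X (f |` U) (f |` W)"
      then show "U \<subseteq> W"
        using \<W>_sub[OF U] by (auto simp: pg_le_iff)
    next
      assume "U \<subseteq> W"
      then show "pg_le X (f |` U) (f |` W)"
        using U W by (simp add: pg_le_restrict_mono[OF D])
    qed
  qed
  moreover have "is_sup_in (sym_pseudogroup X) (pg_le X) ((\<lambda>U. f |` U) ` ?\<W>) f \<longleftrightarrow>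
      is_sup_in (open_sets X) (\<subseteq>) ?\<W> (dom f)"
  proof -
    have "\<Union>?\<W> \<subseteq> dom f"
      using \<W>_sub by (rule Union_least)
    then show ?thesis
      unfolding is_sup_restrictions_iff[OF f \<W>_open] is_sup_in_open_sets_iff[OF \<W>_open]
      by (simp add: order.eq_iff)
  qed
  ultimately show ?thesis
    unfolding continuous_at_in_def way_below_f by simp
qed

theorem corollary5p10:
  fixes X :: "'a topology"
  shows "core_compact X \<longleftrightarrow> continuous_poset (sym_pseudogroup X) (pg_le X)"
proof -
  have "continuous_poset (sym_pseudogroup X) (pg_le X) \<longleftrightarrow>
      (\<forall>f\<in>sym_pseudogroup X. continuous_at_in (open_sets X) (\<subseteq>) (dom f))"
    by (simp add: continuous_poset_iff_at continuous_at_sym_pseudogroup_iff)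
  also have "\<dots> \<longleftrightarrow> (\<forall>V\<in>open_sets X. continuous_at_in (open_sets X) (\<subseteq>) V)"
    by (simp flip: dom_sym_pseudogroup)
  also have "\<dots> \<longleftrightarrow> core_compact X"
    by (simp add: continuous_poset_iff_at core_compact_iff_continuous_open_sets)
  finally show ?thesis ..
qed

end
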